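(* Let $n$ be a positive integer, $i,k\in\{1,\ldots,n\}$ with $k<n$, and let $H\sim\text{Hyp}(n,i,k)$. Then \[ \mathbb{E}(H\mid H\ge \mathbb{E}(H)) \,\le\, \lceil\mathbb{E}(H)\rceil + \sqrt{\text{Var}(H) \cdot \frac{n-1}{n-k} + 1}. \]
   Context: $\text{Hyp}(n,i,k)$ denotes the hypergeometric distribution: the number of black marbles in a sample without replacement of size $k$ from an urn with $i$ black and $n-i$ white marbles, i.e. $\mathbb{P}(H=j)=\binom{i}{j}\binom{n-i}{k-j}/\binom{n}{k}$. One has $\mathbb{E}(H)=ik/n$ and $\text{Var}(H)=k\cdot\frac{i}{n}\cdot\frac{n-i}{n}\cdot\frac{n-k}{n-1}$. For real $x$, $\lceil x\rceil=\min\{s\in\mathbb{Z}: s\ge x\}$. *)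

theory Defs
  imports "HOL-Probability.Probability"
begin

text \<open>Hyp(n,i,k): number of black marbles in a uniformly random k-subset (sample without
replacement) of an urn {0..<n} whose black marbles are {0..<i}.\<close>
definition hyp_pmf :: "nat \<Rightarrow> nat \<Rightarrow> nat \<Rightarrow> nat pmf" where
  "hyp_pmf n i k =
     map_pmf (\<lambda>S. card (S \<inter> {0..<i})) (pmf_of_set {S. S \<subseteq> {0..<n} \<and> card S = k})"

definition hyp_mean :: "nat \<Rightarrow> nat \<Rightarrow> nat \<Rightarrow> real" where
  "hyp_mean n i k = measure_pmf.expectation (hyp_pmf n i k) real"

definition hyp_var :: "nat \<Rightarrow> nat \<Rightarrow> nat \<Rightarrow> real" where
  "hyp_var n i k = measure_pmf.variance (hyp_pmf n i k) real"

definition hyp_upper_cond_mean :: "nat \<Rightarrow> nat \<Rightarrow> nat \<Rightarrow> real" where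
  "hyp_upper_cond_mean n i k =
     measure_pmf.expectation
       (cond_pmf (hyp_pmf n i k) {j. real j \<ge> hyp_mean n i k}) real"

end

theory Submission
  imports Defs
begin

(*
  The probabilities p_j = C(i,j) C(n-i,k-j) / C(n,k) satisfy the Stein-type recursion
  (i-j)(k-j) p_j = (j+1)(n-i-k+j+1) p_(j+1), so for every test function g
  E[(i-H)(k-H) g(H+1)] = E[H(n-i-k+H) g(H)]. The choices g = 1 and g(j) = j give
  n mu = i k and (n-1) Var(H) = (i-mu)(k-mu). Taking g(j) = j - m on {H >= m}, where
  m = ceil(mu), gives n E[(H-m)^2; H >= m] <= (i-mu)(k-mu) P(H >= m). Hence, by
  Cauchy-Schwarz, E(H - m | H >= m) <= sqrt((i-mu)(k-mu)/n) = sqrt((n-1) Var(H)/n),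
  which is below the stated square root.
*)

lemma card_subsets_card_Int:
  assumes "finite U" and "B \<subseteq> U" and "j \<le> k"
  shows "card {S. S \<subseteq> U \<and> card S = k \<and> card (S \<inter> B) = j}
         = (card B choose j) * (card (U - B) choose (k - j))"
proof -
  have fin: "finite B" "finite (U - B)"
    using assms finite_subset by auto
  let ?X = "{T. T \<subseteq> B \<and> card T = j}"
  let ?Y = "{R. R \<subseteq> U - B \<and> card R = k - j}"
  let ?Z = "{S. S \<subseteq> U \<and> card S = k \<and> card (S \<inter> B) = j}"
  have union_mem: "T \<union> R \<in> ?Z" if "T \<in> ?X" "R \<in> ?Y" for T R
  proof -
    have "finite T" "finite R"
      using that fin by (auto intro: finite_subset)
    moreover have "T \<inter> R = {}" "(T \<union> R) \<inter> B = T"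
      using that by blast+
    ultimately show ?thesis
      using that assms by (auto simp: card_Un_disjoint)
  qed
  have split_mem: "(S \<inter> B, S - B) \<in> ?X \<times> ?Y" if "S \<in> ?Z" for S
  proof -
    have "card S = card (S \<inter> B) + card (S - B)"
      using that assms finite_subset card_Int_Diff by blast
    with that show ?thesis
      by auto
  qed
  have "bij_betw (\<lambda>(T, R). T \<union> R) (?X \<times> ?Y) ?Z"
  proof (rule bij_betw_byWitness[where f' = "\<lambda>S. (S \<inter> B, S - B)"])
    show "(\<lambda>(T, R). T \<union> R) ` (?X \<times> ?Y) \<subseteq> ?Z"
      unfolding image_subset_iff using union_mem by auto
    show "(\<lambda>S. (S \<inter> B, S - B)) ` ?Z \<subseteq> ?X \<times> ?Y"
      unfolding image_subset_iff using split_mem by auto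
  qed auto
  then show ?thesis
    by (simp add: bij_betw_same_card[symmetric] card_cartesian_product n_subsets fin)
qed

lemma binomial_absorb_Suc_of_nat:
  "(of_nat n - of_nat k) * of_nat (n choose k)
     = (of_nat (Suc k) * of_nat (n choose Suc k) :: 'a::comm_ring_1)"
proof (cases "k \<le> n")
  case True
  have "(n - k) * (n choose k) = Suc k * (n choose Suc k)"
    using binomial_absorb_comp[of n k] binomial_absorption[of k n] by simp
  then show ?thesis
    using True by (metis of_nat_diff of_nat_mult)
qed (simp add: binomial_eq_0)

lemma exists_set_pmf_ge_expectation:
  fixes f :: "'a \<Rightarrow> real"
  assumes "finite (set_pmf p)"
  shows "\<exists>x\<in>set_pmf p. measure_pmf.expectation p f \<le> f x"
proof (rule ccontr)
  let ?E = "measure_pmf.expectation p f"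
  assume "\<not> ?thesis"
  then have "(\<Sum>x\<in>set_pmf p. f x * pmf p x) < (\<Sum>x\<in>set_pmf p. ?E * pmf p x)"
    using assms set_pmf_not_empty by (intro sum_strict_mono) (auto simp: pmf_positive)
  also have "\<dots> = ?E"
    using assms by (simp add: sum_distrib_left[symmetric] sum_pmf_eq_1)
  also have "\<dots> = (\<Sum>x\<in>set_pmf p. f x * pmf p x)"
    using assms by (simp add: integral_measure_pmf_real)
  finally show False
    by simp
qed

lemma measure_pmf_eq_sum_Int:
  assumes "finite S" and "set_pmf p \<subseteq> S"
  shows "measure_pmf.prob p A = (\<Sum>x\<in>S \<inter> A. pmf p x)"
proof -
  have "measure_pmf.prob p A = measure_pmf.prob p (S \<inter> A)"
    using assms by (intro measure_prob_cong_0) (auto simp: pmf_eq_0_set_pmf)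
  then show ?thesis
    using assms by (simp add: measure_measure_pmf_finite)
qed

lemma expectation_cond_pmf_eq_sum:
  fixes f :: "'a \<Rightarrow> real"
  assumes "finite S" and "set_pmf p \<subseteq> S" and "set_pmf p \<inter> A \<noteq> {}"
  shows "measure_pmf.expectation (cond_pmf p A) f
         = (\<Sum>x\<in>S \<inter> A. f x * pmf p x) / measure_pmf.prob p A"
proof -
  have "measure_pmf.expectation (cond_pmf p A) f
        = (\<Sum>x\<in>S. f x * pmf (cond_pmf p A) x)"
    using assms by (intro integral_measure_pmf_real) auto
  also have "\<dots> = (\<Sum>x\<in>S. if x \<in> A then f x * pmf p x / measure_pmf.prob p A else 0)"
    using assms by (intro sum.cong) (auto simp: pmf_cond)
  also have "\<dots> = (\<Sum>x\<in>S \<inter> A. f x * pmf p x) / measure_pmf.prob p A"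
    using assms by (simp add: sum.If_cases sum_divide_distrib Int_commute)
  finally show ?thesis .
qed

lemma weighted_mean_le_sqrt_weighted_mean_square:
  fixes w x :: "'a \<Rightarrow> real"
  assumes "\<And>a. a \<in> S \<Longrightarrow> 0 \<le> w a" and "0 < sum w S"
  shows "(\<Sum>a\<in>S. x a * w a) / sum w S
         \<le> sqrt ((\<Sum>a\<in>S. (x a)\<^sup>2 * w a) / sum w S)"
proof (rule real_le_rsqrt)
  have "(\<Sum>a\<in>S. x a * w a)\<^sup>2 = (\<Sum>a\<in>S. (x a * sqrt (w a)) * sqrt (w a))\<^sup>2"
    using assms(1)
    by (intro arg_cong[where f = "\<lambda>t. t\<^sup>2"] sum.cong) (auto simp: mult.assoc)
  also have "\<dots> \<le> (\<Sum>a\<in>S. (x a * sqrt (w a))\<^sup>2) * (\<Sum>a\<in>S. (sqrt (w a))\<^sup>2)"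
    by (rule Cauchy_Schwarz_ineq_sum)
  also have "\<dots> = (\<Sum>a\<in>S. (x a)\<^sup>2 * w a) * sum w S"
    using assms(1) by (simp add: power_mult_distrib)
  finally show "((\<Sum>a\<in>S. x a * w a) / sum w S)\<^sup>2
                \<le> (\<Sum>a\<in>S. (x a)\<^sup>2 * w a) / sum w S"
    using assms(2) by (simp add: power2_eq_square divide_simps)
qed

locale hypergeometric =
  fixes n i k :: nat
  assumes i_le_n: "i \<le> n" and k_le_n: "k \<le> n"
begin

abbreviation P :: "nat \<Rightarrow> real" where "P \<equiv> pmf (hyp_pmf n i k)"

abbreviation \<mu> :: real where "\<mu> \<equiv> hyp_mean n i k"

lemma samples_finite_nonempty:
  "finite {S. S \<subseteq> {0..<n} \<and> card S = k}"
  "{S. S \<subseteq> {0..<n} \<and> card S = k} \<noteq> {}"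
proof -
  show "finite {S. S \<subseteq> {0..<n} \<and> card S = k}"
    by (rule finite_subset[of _ "Pow {0..<n}"]) auto
  have "{0..<k} \<in> {S. S \<subseteq> {0..<n} \<and> card S = k}"
    using k_le_n by auto
  then show "{S. S \<subseteq> {0..<n} \<and> card S = k} \<noteq> {}"
    by blast
qed

lemma set_pmf_hyp_pmf: "set_pmf (hyp_pmf n i k) \<subseteq> {..min i k}"
proof -
  have "card (S \<inter> {0..<i}) \<le> min i k" if "S \<subseteq> {0..<n}" "card S = k" for S
    using that card_mono[of "{0..<i}" "S \<inter> {0..<i}"] card_mono[of S "S \<inter> {0..<i}"]
    by (simp add: finite_subset)
  then show ?thesis
    unfolding hyp_pmf_def using samples_finite_nonempty by auto
qed

lemma set_pmf_hyp_pmf_atMost_k: "set_pmf (hyp_pmf n i k) \<subseteq> {..k}"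
  using set_pmf_hyp_pmf by auto

lemma finite_set_pmf_hyp_pmf: "finite (set_pmf (hyp_pmf n i k))"
  using set_pmf_hyp_pmf finite_subset by blast

lemma pmf_hyp_pmf_eq_0: "min i k < j \<Longrightarrow> P j = 0"
  using set_pmf_hyp_pmf by (auto simp: pmf_eq_0_set_pmf)

lemma pmf_hyp_pmf:
  assumes "j \<le> k"
  shows "P j = real ((i choose j) * ((n - i) choose (k - j))) / real (n choose k)"
proof -
  let ?S = "{S. S \<subseteq> {0..<n} \<and> card S = k}"
  have "?S \<inter> (\<lambda>S. card (S \<inter> {0..<i})) -` {j}
        = {S. S \<subseteq> {0..<n} \<and> card S = k \<and> card (S \<inter> {0..<i}) = j}"
    by auto
  then show ?thesis
    unfolding hyp_pmf_def pmf_map measure_pmf_of_set[OF samples_finite_nonempty(2,1)]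
    using card_subsets_card_Int[of "{0..<n}" "{0..<i}" j k] n_subsets[of "{0..<n}" k]
      i_le_n assms
    by simp
qed

lemma sum_pmf_hyp_pmf: "(\<Sum>j\<le>k. P j) = 1"
  using set_pmf_hyp_pmf_atMost_k by (intro sum_pmf_eq_1) auto

lemma expectation_hyp_pmf:
  "measure_pmf.expectation (hyp_pmf n i k) f = (\<Sum>j\<le>k. f j * P j)"
  using set_pmf_hyp_pmf_atMost_k by (intro integral_measure_pmf_real) auto

lemma Stein_identity:
  "(real i - j) * (real k - j) * P j = Suc j * (real n - i - k + Suc j) * P (Suc j)"
proof (cases "j < k")
  case True
  define r where "r = k - Suc j"
  have k_minus_j: "k - j = Suc r" "real k - j = Suc r"
    and r_eq: "real (n - i) - r = real n - i - k + Suc j"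
    using True i_le_n unfolding r_def by (auto simp: of_nat_diff)
  have "(real i - j) * (real k - j) * P j
        = (real i - j) * (i choose j) * (real (Suc r) * ((n - i) choose Suc r)) / (n choose k)"
    using True by (simp add: pmf_hyp_pmf k_minus_j)
  also have "\<dots> = real (Suc j) * (i choose Suc j) * ((real (n - i) - r) * ((n - i) choose r))
                    / (n choose k)"
    by (simp only: binomial_absorb_Suc_of_nat)
  also have "\<dots> = Suc j * (real n - i - k + Suc j) * P (Suc j)"
    unfolding r_eq using True by (simp add: pmf_hyp_pmf flip: r_def)
  finally show ?thesis .
next
  case False
  then have "(real k - j) * P j = 0"
    using pmf_hyp_pmf_eq_0[of j] by (cases "j = k") auto
  then show ?thesis
    using False pmf_hyp_pmf_eq_0[of "Suc j"] by simp
qed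

lemma Stein_sum:
  fixes g :: "nat \<Rightarrow> real"
  assumes "m = 0 \<or> g m = 0"
  shows "(\<Sum>j=m..k. (real i - j) * (real k - j) * g (Suc j) * P j)
         = (\<Sum>j=m..k. real j * (real n - i - k + j) * g j * P j)"
proof (cases "m \<le> k")
  case True
  let ?h = "\<lambda>j. real j * (real n - i - k + j) * g j * P j"
  have "(\<Sum>j=m..k. (real i - j) * (real k - j) * g (Suc j) * P j)
        = (\<Sum>j=m..k. ?h (Suc j))"
  proof (rule sum.cong)
    fix j
    show "(real i - j) * (real k - j) * g (Suc j) * P j = ?h (Suc j)"
      using Stein_identity[of j] by (simp only: ac_simps)
  qed simp
  also have "\<dots> = (\<Sum>j=m..k. ?h j)"
  proof -
    have vanish: "?h (Suc k) = 0" "?h m = 0"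
      using assms pmf_hyp_pmf_eq_0[of "Suc k"] by auto
    show ?thesis
      using sum.Suc_reindex_ivl[OF True, of ?h] unfolding vanish by simp
  qed
  finally show ?thesis .
qed simp

lemma mean_eq: "real n * \<mu> = real i * real k"
proof -
  have "0 = (\<Sum>j\<le>k. (real i - j) * (real k - j) * P j - real j * (real n - i - k + j) * P j)"
    using Stein_sum[of 0 "\<lambda>_. 1"] by (simp add: sum_subtractf atLeast0AtMost)
  also have "\<dots> = (\<Sum>j\<le>k. real i * k * P j - real n * (j * P j))"
    by (intro sum.cong) (simp_all add: algebra_simps)
  also have "\<dots> = real i * k - real n * \<mu>"
    by (simp add: sum_subtractf sum_distrib_left[symmetric] sum_pmf_hyp_pmf hyp_mean_def
        expectation_hyp_pmf)
  finally show ?thesis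
    by simp
qed

lemma variance_eq: "(real n - 1) * hyp_var n i k = (real i - \<mu>) * (real k - \<mu>)"
proof -
  define E2 where "E2 = (\<Sum>j\<le>k. (real j)\<^sup>2 * P j)"
  have var: "hyp_var n i k = E2 - \<mu>\<^sup>2"
    unfolding hyp_var_def hyp_mean_def E2_def expectation_hyp_pmf[symmetric]
    by (intro measure_pmf.variance_eq integrable_measure_pmf_finite finite_set_pmf_hyp_pmf)
  have "0 = (\<Sum>j\<le>k. (real i - j) * (real k - j) * Suc j * P j
                     - real j * (real n - i - k + j) * j * P j)"
    using Stein_sum[of 0 real] by (simp add: sum_subtractf atLeast0AtMost)
  also have "\<dots> = (\<Sum>j\<le>k. real i * k * P j + (real i * k - i - k) * (j * P j)
                             + (1 - real n) * ((real j)\<^sup>2 * P j))"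
    by (intro sum.cong) (simp_all add: algebra_simps power2_eq_square)
  also have "\<dots> = real i * k + (real i * k - i - k) * \<mu> + (1 - real n) * E2"
    by (simp add: sum.distrib sum_distrib_left[symmetric] sum_pmf_hyp_pmf hyp_mean_def
        expectation_hyp_pmf E2_def)
  finally have second_moment: "(real n - 1) * E2 = real i * k + (real i * k - i - k) * \<mu>"
    by (simp add: algebra_simps)
  have "real i * k * \<mu> = real n * \<mu> * \<mu>"
    using mean_eq by simp
  then show ?thesis
    unfolding var using second_moment by (simp add: algebra_simps power2_eq_square)
qed

lemma upper_tail_second_moment:
  fixes m :: nat
  assumes "\<mu> \<le> m"
  shows "real n * (\<Sum>j=m..k. (real j - m)\<^sup>2 * P j)
         \<le> (real i - \<mu>) * (real k - \<mu>) * (\<Sum>j=m..k. P j)"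
proof -
  have Stein_tail: "(\<Sum>j=m..k. (real n * j - real i * k) * (real j - m) * P j)
                    = (\<Sum>j=m..k. (real i - j) * (real k - j) * P j)"
  proof -
    have "0 = (\<Sum>j=m..k. (real i - j) * (real k - j) * (real (Suc j) - m) * P j
                         - real j * (real n - i - k + j) * (real j - m) * P j)"
      using Stein_sum[of m "\<lambda>j. real j - m"] by (simp add: sum_subtractf)
    also have "\<dots> = (\<Sum>j=m..k. (real i - j) * (real k - j) * P j
                                 - (real n * j - real i * k) * (real j - m) * P j)"
      by (intro sum.cong) (simp_all add: algebra_simps)
    finally show ?thesis
      by (simp add: sum_subtractf)
  qed
  have "real n * (\<Sum>j=m..k. (real j - m)\<^sup>2 * P j)
        = (\<Sum>j=m..k. real n * (real j - m) * (real j - m) * P j)"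
    by (simp add: sum_distrib_left power2_eq_square mult.assoc)
  also have "\<dots> \<le> (\<Sum>j=m..k. (real n * j - real i * k) * (real j - m) * P j)"
  proof (rule sum_mono)
    fix j assume "j \<in> {m..k}"
    moreover have "real n * (real j - m) \<le> real n * j - real i * k"
      using mean_eq assms mult_left_mono[OF assms, of n] by (simp add: algebra_simps)
    ultimately show "real n * (real j - m) * (real j - m) * P j
                     \<le> (real n * j - real i * k) * (real j - m) * P j"
      by (intro mult_right_mono) auto
  qed
  also have "\<dots> = (\<Sum>j=m..k. (real i - j) * (real k - j) * P j)"
    by (fact Stein_tail)
  also have "\<dots> \<le> (\<Sum>j=m..k. (real i - \<mu>) * (real k - \<mu>) * P j)"
  proof (rule sum_mono)
    fix j assume j: "j \<in> {m..k}"
    show "(real i - j) * (real k - j) * P j \<le> (real i - \<mu>) * (real k - \<mu>) * P j"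
    proof (cases "j \<le> i")
      case True
      with j assms show ?thesis
        by (intro mult_right_mono mult_mono) auto
    qed (simp add: pmf_hyp_pmf_eq_0)
  qed
  also have "\<dots> = (real i - \<mu>) * (real k - \<mu>) * (\<Sum>j=m..k. P j)"
    by (simp add: sum_distrib_left)
  finally show ?thesis .
qed

lemma upper_cond_mean_le:
  assumes "0 < n"
  shows "hyp_upper_cond_mean n i k
         \<le> of_int \<lceil>\<mu>\<rceil> + sqrt ((real i - \<mu>) * (real k - \<mu>) / n)"
proof -
  define m where "m = nat \<lceil>\<mu>\<rceil>"
  define A where "A = {j. \<mu> \<le> real j}"
  define q where "q = (\<Sum>j=m..k. P j)"
  have "0 \<le> \<mu>"
    unfolding hyp_mean_def expectation_hyp_pmf by (intro sum_nonneg) auto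
  then have m: "real m = of_int \<lceil>\<mu>\<rceil>"
    by (simp add: m_def)
  have A_Int: "{..k} \<inter> A = {m..k}"
    using \<open>0 \<le> \<mu>\<close> by (auto simp: A_def m_def ceiling_le_iff nat_le_iff)
  have A_hit: "set_pmf (hyp_pmf n i k) \<inter> A \<noteq> {}"
    using exists_set_pmf_ge_expectation[OF finite_set_pmf_hyp_pmf, of real]
    by (auto simp: A_def hyp_mean_def)
  moreover have prob_A: "measure_pmf.prob (hyp_pmf n i k) A = q"
    using measure_pmf_eq_sum_Int[of "{..k}"] set_pmf_hyp_pmf_atMost_k A_Int
    by (auto simp: q_def)
  ultimately have "0 < q"
    by (metis IntE ex_in_conv measure_pmf_posI)
  have "hyp_upper_cond_mean n i k
        = (\<Sum>j\<in>{..k} \<inter> A. real j * P j) / measure_pmf.prob (hyp_pmf n i k) A"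
    unfolding hyp_upper_cond_mean_def A_def[symmetric]
    by (rule expectation_cond_pmf_eq_sum[OF _ set_pmf_hyp_pmf_atMost_k A_hit]) simp
  also have "\<dots> = (\<Sum>j=m..k. real j * P j) / q"
    by (simp only: A_Int prob_A)
  also have "\<dots> = m + (\<Sum>j=m..k. (real j - m) * P j) / q"
  proof -
    have "(\<Sum>j=m..k. real j * P j) = m * q + (\<Sum>j=m..k. (real j - m) * P j)"
      by (simp add: q_def sum_distrib_left algebra_simps sum_subtractf)
    with \<open>0 < q\<close> show ?thesis
      by (simp add: field_simps)
  qed
  also have "\<dots> \<le> m + sqrt ((\<Sum>j=m..k. (real j - m)\<^sup>2 * P j) / q)"
    using weighted_mean_le_sqrt_weighted_mean_square[of "{m..k}" P] \<open>0 < q\<close>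
    by (simp add: q_def)
  also have "\<dots> \<le> m + sqrt ((real i - \<mu>) * (real k - \<mu>) / n)"
    using upper_tail_second_moment[of m] \<open>0 < q\<close> assms m
    by (auto simp: q_def divide_simps mult.commute intro!: real_sqrt_le_mono)
  finally show ?thesis
    by (simp add: m)
qed

end

theorem theorem5:
  fixes n i k :: nat
  assumes "0 < n" and "1 \<le> i" and "i \<le> n" and "1 \<le> k" and "k < n"
  shows "hyp_upper_cond_mean n i k
           \<le> of_int \<lceil>hyp_mean n i k\<rceil>
              + sqrt (hyp_var n i k * (real n - 1) / (real n - real k) + 1)"
proof -
  interpret hypergeometric n i k
    using assms by unfold_locales auto
  have "0 \<le> hyp_var n i k"
    unfolding hyp_var_def by (rule measure_pmf.variance_positive)
  then have "0 \<le> (real i - \<mu>) * (real k - \<mu>)"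
    using assms(1) by (simp flip: variance_eq)
  then have "(real i - \<mu>) * (real k - \<mu>) / n
             \<le> (real i - \<mu>) * (real k - \<mu>) / (real n - real k)"
    using assms by (intro divide_left_mono) auto
  also have "\<dots> = hyp_var n i k * (real n - 1) / (real n - real k)"
    by (simp add: variance_eq[symmetric] mult.commute)
  finally have "sqrt ((real i - \<mu>) * (real k - \<mu>) / n)
                \<le> sqrt (hyp_var n i k * (real n - 1) / (real n - real k) + 1)"
    by (intro real_sqrt_le_mono) linarith
  with upper_cond_mean_le[OF assms(1)] show ?thesis
    by linarith
qed

end
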